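(* Let $G, H$ be finite groups, and consider the bijective Version I pebble game on $(G,H)$. Suppose that at some round Duplicator selects a bijection $f : G \to H$ such that $|C_{G}(x)| \neq |C_{H}(f(x))|$ for some $x \in G$. Then Spoiler can win using $3$ pebble pairs within $3$ rounds.
   Context: $C_G(x)$ denotes the centralizer of $x$ in $G$. Bijective Version I pebble game on finite groups $G,H$: if $|G|\ne|H|$ Spoiler wins at once. Each round: Spoiler picks up a pebble pair $(p_i,p_i')$; the winning condition is checked; Duplicator chooses a bijection $f:G\to H$; Spoiler places $p_i$ on some $g\in G$ and $p_i'$ is placed on $f(g)$. Spoiler wins when, with $g_1,\ldots,g_\ell\in G$ and $h_1,\ldots,h_\ell \in H$ the corresponding pebbled elements, the map $g_i\mapsto h_i$ is not a marked equivalence, i.e. it is not the case that for all $i,j,t$: $g_i=g_j\iff h_i=h_j$ and $g_ig_j=g_t\iff h_ih_j=h_t$. *)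

theory Defs
  imports "HOL-Algebra.Group"
begin

definition centralizer :: "('a, 'm) monoid_scheme \<Rightarrow> 'a \<Rightarrow> 'a set" where
  "centralizer G x = {y \<in> carrier G. x \<otimes>\<^bsub>G\<^esub> y = y \<otimes>\<^bsub>G\<^esub> x}"

text \<open>A pebble configuration: pebble pair number i is either off the board (None)
  or placed on (g_i, h_i) (Some (g_i, h_i)).\<close>
type_synonym ('a, 'b) config = "nat \<Rightarrow> ('a \<times> 'b) option"

definition marked_equiv ::
  "('a, 'm) monoid_scheme \<Rightarrow> ('b, 'n) monoid_scheme \<Rightarrow> ('a, 'b) config \<Rightarrow> bool" where
  "marked_equiv G H c \<longleftrightarrow>
     (\<forall>i j t gi hi gj hj gt ht. c i = Some (gi, hi) \<longrightarrow> c j = Some (gj, hj) \<longrightarrow>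
        c t = Some (gt, ht) \<longrightarrow>
        ((gi = gj \<longleftrightarrow> hi = hj) \<and>
         (gi \<otimes>\<^bsub>G\<^esub> gj = gt \<longleftrightarrow> hi \<otimes>\<^bsub>H\<^esub> hj = ht)))"

text \<open>A round: Spoiler picks up pebble pair i < k; the winning condition is checked;
  Duplicator chooses a bijection f; Spoiler places p_i on some g and p_i' on f g.\<close>
fun spoiler_wins ::
  "('a, 'm) monoid_scheme \<Rightarrow> ('b, 'n) monoid_scheme \<Rightarrow> nat \<Rightarrow> nat \<Rightarrow> ('a, 'b) config \<Rightarrow> bool" where
  "spoiler_wins G H k 0 c \<longleftrightarrow> \<not> marked_equiv G H c"
| "spoiler_wins G H k (Suc r) c \<longleftrightarrow>
     \<not> marked_equiv G H c \<or>
     (\<exists>i<k. \<not> marked_equiv G H (c(i := None)) \<or>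
        (\<forall>f. bij_betw f (carrier G) (carrier H) \<longrightarrow>
           (\<exists>g\<in>carrier G. spoiler_wins G H k r (c(i := Some (g, f g))))))"

end

theory Submission
  imports Defs
begin

text \<open>Spoiler places the first pebble pair on x. Since C(x) and C(f x) differ in size, no
  bijection f' chosen next by Duplicator maps C(x) onto C(f x), so Spoiler can pebble some g
  that commutes with x while f' g does not commute with f x, or vice versa. Finally Spoiler
  pebbles x g: a marked equivalence must send it both to (f x)(f' g), because x g is the
  product of the pebbled x and g, and to (f' g)(f x) exactly when g x = x g, which is
  impossible.\<close>

lemma card_eq_if_bij_betw_preserves:
  assumes "bij_betw f A B" "S \<subseteq> A" "T \<subseteq> B" "\<forall>a\<in>A. a \<in> S \<longleftrightarrow> f a \<in> T"
  shows "card S = card T"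
proof -
  have "f ` S = T"
  proof
    show "f ` S \<subseteq> T" using assms(2,4) by auto
    show "T \<subseteq> f ` S"
    proof
      fix t assume "t \<in> T"
      then obtain a where "a \<in> A" "t = f a"
        using assms(1,3) unfolding bij_betw_def by auto
      with \<open>t \<in> T\<close> assms(4) show "t \<in> f ` S" by auto
    qed
  qed
  then have "bij_betw f S T"
    using assms(1,2) bij_betw_subset by blast
  then show ?thesis by (rule bij_betw_same_card)
qed

lemma centralizer_subset_carrier: "centralizer G x \<subseteq> carrier G"
  unfolding centralizer_def by auto

lemma bij_betw_not_preserves_centralizer:
  assumes "bij_betw f (carrier G) (carrier H)"
    and "card (centralizer G x) \<noteq> card (centralizer H y)"
  obtains g where "g \<in> carrier G" "\<not> (g \<in> centralizer G x \<longleftrightarrow> f g \<in> centralizer H y)"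
  using card_eq_if_bij_betw_preserves[OF assms(1) centralizer_subset_carrier
      centralizer_subset_carrier] assms(2) by blast

lemma marked_equiv_product_iff:
  assumes "marked_equiv G H d"
    and "d a = Some (ga, ha)" "d b = Some (gb, hb)" "d t = Some (gt, ht)"
  shows "ga \<otimes>\<^bsub>G\<^esub> gb = gt \<longleftrightarrow> ha \<otimes>\<^bsub>H\<^esub> hb = ht"
  using assms unfolding marked_equiv_def by blast

lemma marked_equiv_commute_iff:
  assumes "marked_equiv G H d"
    and "d i = Some (x, y)" "d j = Some (g, h)" "d l = Some (x \<otimes>\<^bsub>G\<^esub> g, z)"
  shows "x \<otimes>\<^bsub>G\<^esub> g = g \<otimes>\<^bsub>G\<^esub> x \<longleftrightarrow> y \<otimes>\<^bsub>H\<^esub> h = h \<otimes>\<^bsub>H\<^esub> y"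
proof -
  from marked_equiv_product_iff[OF assms(1-4)] have "y \<otimes>\<^bsub>H\<^esub> h = z"
    by simp
  moreover have "g \<otimes>\<^bsub>G\<^esub> x = x \<otimes>\<^bsub>G\<^esub> g \<longleftrightarrow> h \<otimes>\<^bsub>H\<^esub> y = z"
    by (rule marked_equiv_product_iff[OF assms(1,3,2,4)])
  ultimately show ?thesis
    by metis
qed

lemma spoiler_wins_SucI:
  assumes "i < k"
    and "\<And>f. bij_betw f (carrier G) (carrier H) \<Longrightarrow>
           \<exists>g\<in>carrier G. spoiler_wins G H k r (c(i := Some (g, f g)))"
  shows "spoiler_wins G H k (Suc r) c"
  using assms by auto

lemma spoiler_wins_one_round_if_centralizer_differs:
  assumes "monoid G" "x \<in> carrier G" "g \<in> carrier G" "h \<in> carrier H"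
    and "d i = Some (x, y)" "d j = Some (g, h)"
    and "l < k" "l \<noteq> i" "l \<noteq> j"
    and "\<not> (g \<in> centralizer G x \<longleftrightarrow> h \<in> centralizer H y)"
  shows "spoiler_wins G H k 1 d"
  unfolding One_nat_def
proof (rule spoiler_wins_SucI[OF \<open>l < k\<close>])
  fix f
  have "x \<otimes>\<^bsub>G\<^esub> g \<in> carrier G"
    using assms(1-3) by (rule monoid.m_closed)
  moreover have "\<not> marked_equiv G H (d(l := Some (x \<otimes>\<^bsub>G\<^esub> g, f (x \<otimes>\<^bsub>G\<^esub> g))))"
  proof
    assume equiv: "marked_equiv G H (d(l := Some (x \<otimes>\<^bsub>G\<^esub> g, f (x \<otimes>\<^bsub>G\<^esub> g))))"
    have "(d(l := Some (x \<otimes>\<^bsub>G\<^esub> g, f (x \<otimes>\<^bsub>G\<^esub> g)))) i = Some (x, y)"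
      "(d(l := Some (x \<otimes>\<^bsub>G\<^esub> g, f (x \<otimes>\<^bsub>G\<^esub> g)))) j = Some (g, h)"
      "(d(l := Some (x \<otimes>\<^bsub>G\<^esub> g, f (x \<otimes>\<^bsub>G\<^esub> g)))) l = Some (x \<otimes>\<^bsub>G\<^esub> g, f (x \<otimes>\<^bsub>G\<^esub> g))"
      using assms(5,6,8,9) by simp_all
    from marked_equiv_commute_iff[OF equiv this]
    have "x \<otimes>\<^bsub>G\<^esub> g = g \<otimes>\<^bsub>G\<^esub> x \<longleftrightarrow> y \<otimes>\<^bsub>H\<^esub> h = h \<otimes>\<^bsub>H\<^esub> y" .
    with assms(3,4,10) show False
      unfolding centralizer_def by auto
  qed
  ultimately show "\<exists>g'\<in>carrier G.
      spoiler_wins G H k 0 (d(l := Some (g', f g')))"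
    by auto
qed

lemma spoiler_wins_two_rounds_if_centralizer_card_differs:
  assumes "monoid G" "x \<in> carrier G" "d i = Some (x, y)"
    and "j < k" "l < k" "i \<noteq> j" "i \<noteq> l" "j \<noteq> l"
    and "card (centralizer G x) \<noteq> card (centralizer H y)"
  shows "spoiler_wins G H k 2 d"
  unfolding numeral_2_eq_2
proof (rule spoiler_wins_SucI[OF \<open>j < k\<close>])
  fix f assume bij: "bij_betw f (carrier G) (carrier H)"
  then obtain g where g: "g \<in> carrier G"
    "\<not> (g \<in> centralizer G x \<longleftrightarrow> f g \<in> centralizer H y)"
    using assms(9) by (rule bij_betw_not_preserves_centralizer)
  have "f g \<in> carrier H"
    using bij g(1) by (rule bij_betw_apply)
  have "spoiler_wins G H k 1 (d(j := Some (g, f g)))"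
    by (rule spoiler_wins_one_round_if_centralizer_differs
        [OF assms(1,2) g(1) \<open>f g \<in> carrier H\<close> _ _ \<open>l < k\<close> _ _ g(2)])
      (use assms(3,6-8) in auto)
  with g(1) show "\<exists>g\<in>carrier G. spoiler_wins G H k (Suc 0) (d(j := Some (g, f g)))"
    by auto
qed

lemma two_other_indices:
  assumes "3 \<le> k" "i < (k::nat)"
  obtains j l where "j < k" "l < k" "i \<noteq> j" "i \<noteq> l" "j \<noteq> l"
proof
  show "(if i = 0 then 1 else 0) < k" "(if i = 2 then 1 else 2) < k"
    using assms(1) by auto
  show "i \<noteq> (if i = 0 then 1 else 0)" "i \<noteq> (if i = 2 then 1 else 2)"
    "(if i = 0 then 1 else 0) \<noteq> (if i = 2 then (1::nat) else 2)"
    by auto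
qed

theorem lemma4p13:
  fixes G :: "('a, 'm) monoid_scheme" and H :: "('b, 'n) monoid_scheme"
    and c :: "('a, 'b) config" and f :: "'a \<Rightarrow> 'b"
  assumes "group G" and "group H"
    and "finite (carrier G)" and "finite (carrier H)"
    and "3 \<le> k" and "i < k"
    and "\<forall>j. c j \<noteq> None \<longrightarrow> j < k"
    and "\<forall>j g h. c j = Some (g, h) \<longrightarrow> g \<in> carrier G \<and> h \<in> carrier H"
    and "bij_betw f (carrier G) (carrier H)"
    and "x \<in> carrier G"
    and "card (centralizer G x) \<noteq> card (centralizer H (f x))"
  shows "\<exists>g\<in>carrier G. spoiler_wins G H k 2 (c(i := Some (g, f g)))"
proof
  obtain j l where "j < k" "l < k" "i \<noteq> j" "i \<noteq> l" "j \<noteq> l"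
    using assms(5,6) by (rule two_other_indices)
  then show "spoiler_wins G H k 2 (c(i := Some (x, f x)))"
    using spoiler_wins_two_rounds_if_centralizer_card_differs
        [OF group.is_monoid[OF assms(1)] assms(10) _ _ _ _ _ _ assms(11), where i = i]
    by simp
  show "x \<in> carrier G" by fact
qed

end
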